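(* Let $c=q_1^{a_1}\cdots q_\omega^{a_\omega}$ with $q_1,\dots,q_\omega$ distinct primes and $a_j\ge1$. If $a_i=1$ for some $i$, then $$E_c(q_i)=\frac{\varphi(c)}{q_i-1}-E_{c/q_i}(q_i).$$
   Context: $\varphi$ is Euler's totient function. For a positive integer $n$ with distinct prime factors $p_1,\dots,p_r$ ($r=0$ if $n=1$) and real $x\ne 0$, $$E_n(x)=\sum_{S\subseteq\{1,\dots,r\}}(-1)^{|S|}\left\lfloor \frac{n}{x\prod_{j\in S}p_j}\right\rfloor$$ (so $E_1(x)=\lfloor 1/x\rfloor$). *)

theory Defs
  imports "HOL-Analysis.Analysis" "HOL-Number_Theory.Number_Theory"
begin

definition E :: "nat \<Rightarrow> real \<Rightarrow> int" where
  "E n x = (\<Sum>S\<in>Pow (prime_factors n).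
      (-1) ^ card S * \<lfloor>real n / (x * real (\<Prod>S))\<rfloor>)"

end

theory Submission
  imports Defs
begin

(* Splitting the subsets of the prime factors of q m (q a prime not dividing m) according to
   whether they contain q gives E_{qm}(x) = E_m(x/q) - E_m(x). At x = q the first term is E_m(1),
   whose floors are exact quotients, so it is the inclusion-exclusion expression for
   phi(m) = phi(q m)/(q - 1). *)

lemma sum_Pow_insert:
  assumes "finite A" "a \<notin> A"
  shows "(\<Sum>S\<in>Pow (insert a A). f S) = (\<Sum>S\<in>Pow A. f S) + (\<Sum>S\<in>Pow A. f (insert a S))"
proof -
  have "inj_on (insert a) (Pow A)"
    using assms(2) by (auto simp: inj_on_def)
  moreover have "(\<Sum>S\<in>Pow (insert a A). f S) = (\<Sum>S\<in>Pow A. f S) + (\<Sum>S\<in>insert a ` Pow A. f S)"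
    unfolding Pow_insert by (rule sum.union_disjoint) (use assms in auto)
  ultimately show ?thesis
    by (simp add: sum.reindex)
qed

lemma prod_one_minus_eq_sum_Pow:
  fixes f :: "'a \<Rightarrow> 'b::comm_ring_1"
  assumes "finite A"
  shows "(\<Prod>x\<in>A. 1 - f x) = (\<Sum>S\<in>Pow A. (-1) ^ card S * prod f S)"
proof -
  have "(\<Prod>x\<in>A. 1 - f x) = (\<Prod>x\<in>A. - f x + 1)"
    by simp
  also have "\<dots> = (\<Sum>S\<in>Pow A. (\<Prod>x\<in>S. - f x) * (\<Prod>x\<in>A - S. 1))"
    by (rule prod_add[OF assms])
  finally show ?thesis
    by (simp add: prod_uminus)
qed

lemma prod_dvd_of_subset_prime_factors:
  fixes n :: nat
  assumes "S \<subseteq> prime_factors n"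
  shows "\<Prod>S dvd n"
proof (cases "n = 0")
  case False
  have "mset_set S \<subseteq># mset_set (prime_factors n)"
    using assms by (rule subset_imp_msubset_mset_set) simp
  then have "mset_set S \<subseteq># prime_factorization n"
    using mset_set_set_mset_msubset subset_mset.order_trans by blast
  then have "prod_mset (mset_set S) dvd prod_mset (prime_factorization n)"
    by (rule prod_mset_subset_imp_dvd)
  with False show ?thesis
    by (simp add: prod_unfold_prod_mset prod_mset_prime_factorization)
qed simp

lemma totient_eq_alternating_sum:
  "int (totient n) = (\<Sum>S\<in>Pow (prime_factors n). (-1) ^ card S * int (n div \<Prod>S))"
  (is "_ = ?sum")
proof -
  have "real (totient n) = real n * (\<Prod>p\<in>prime_factors n. 1 - 1 / real p)"
    by (rule totient_formula2)
  also have "\<dots> = (\<Sum>S\<in>Pow (prime_factors n). (-1) ^ card S * (real n / real (\<Prod>S)))"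
    by (simp add: prod_one_minus_eq_sum_Pow sum_distrib_left prod_dividef ac_simps)
  also have "\<dots> = (\<Sum>S\<in>Pow (prime_factors n). (-1) ^ card S * real (n div \<Prod>S))"
    by (intro sum.cong refl) (simp add: real_of_nat_div prod_dvd_of_subset_prime_factors)
  finally have "real_of_int (int (totient n)) = real_of_int ?sum"
    by simp
  then show ?thesis
    by (rule of_int_eq_iff[THEN iffD1])
qed

lemma E_one_eq_totient: "E n 1 = int (totient n)"
  by (simp add: E_def floor_divide_of_nat_eq totient_eq_alternating_sum del: of_nat_prod)

lemma E_mult_prime:
  assumes "prime q" "\<not> q dvd m"
  shows "E (q * m) x = E m (x / real q) - E m x"
proof -
  let ?P = "prime_factors m"
  have "m \<noteq> 0"
    using assms(2) by (metis dvd_0_right)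
  have "q \<noteq> 0"
    using assms(1) by auto
  with \<open>m \<noteq> 0\<close> have factors: "prime_factors (q * m) = insert q ?P"
    using assms(1) by (simp add: prime_factors_product prime_prime_factors)
  have "q \<notin> ?P"
    using assms(2) by auto
  then have "E (q * m) x = (\<Sum>S\<in>Pow ?P. (-1) ^ card S * \<lfloor>real (q * m) / (x * real (\<Prod>S))\<rfloor>)
      + (\<Sum>S\<in>Pow ?P. (-1) ^ card (insert q S) * \<lfloor>real (q * m) / (x * real (\<Prod>(insert q S)))\<rfloor>)"
    unfolding E_def factors by (intro sum_Pow_insert) simp_all
  also have "(\<Sum>S\<in>Pow ?P. (-1) ^ card S * \<lfloor>real (q * m) / (x * real (\<Prod>S))\<rfloor>) = E m (x / real q)"
    unfolding E_def using \<open>q \<noteq> 0\<close> by (intro sum.cong refl) (simp add: mult.commute)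
  also have "(\<Sum>S\<in>Pow ?P. (-1) ^ card (insert q S) * \<lfloor>real (q * m) / (x * real (\<Prod>(insert q S)))\<rfloor>)
      = - E m x"
    unfolding E_def sum_negf[symmetric]
  proof (intro sum.cong refl)
    fix S assume "S \<in> Pow ?P"
    then have "finite S" "q \<notin> S"
      using \<open>q \<notin> ?P\<close> finite_subset by auto
    then show "(-1) ^ card (insert q S) * \<lfloor>real (q * m) / (x * real (\<Prod>(insert q S)))\<rfloor>
        = - ((-1) ^ card S * \<lfloor>real m / (x * real (\<Prod>S))\<rfloor>)"
      using \<open>q \<noteq> 0\<close> by simp
  qed
  finally show ?thesis
    by simp
qed

lemma multiplicity_eq_1_decomp:
  fixes c q :: nat
  assumes "prime q" "multiplicity q c = 1"
  shows "c = q * (c div q)" "\<not> q dvd c div q"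
proof -
  have "c \<noteq> 0"
    using assms(2) by (metis multiplicity_zero zero_neq_one)
  then have "q dvd c"
    using assms prime_multiplicity_gt_zero_iff[of q c] by simp
  then show c: "c = q * (c div q)"
    by simp
  with \<open>c \<noteq> 0\<close> have "c div q \<noteq> 0"
    by (metis mult_0_right)
  then have "multiplicity q (q * (c div q)) = Suc (multiplicity q (c div q))"
    using assms(1) by (intro multiplicity_times_same) auto
  then have "multiplicity q (c div q) = 0"
    unfolding c[symmetric] assms(2) by simp
  then show "\<not> q dvd c div q"
    using \<open>c div q \<noteq> 0\<close> assms(1) prime_multiplicity_gt_zero_iff[of q "c div q"] by simp
qed

theorem lemma4:
  fixes c q :: nat
  assumes "c > 0" and "prime q" and "multiplicity q c = 1"
  shows "real_of_int (E c (real q)) = real (totient c) / (real q - 1) - real_of_int (E (c div q) (real q))"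
proof -
  define m where "m = c div q"
  have c: "c = q * m" and "\<not> q dvd m"
    using multiplicity_eq_1_decomp[OF assms(2,3)] unfolding m_def by simp_all
  have "q > 1"
    using assms(2) prime_gt_1_nat by blast
  have "E c (real q) = int (totient m) - E m (real q)"
    using E_mult_prime[OF assms(2) \<open>\<not> q dvd m\<close>, of "real q"] \<open>q > 1\<close>
    by (simp add: c E_one_eq_totient)
  moreover have "totient c = (q - 1) * totient m"
    using assms(2) \<open>\<not> q dvd m\<close>
    by (simp add: c totient_mult_coprime totient_prime prime_imp_coprime)
  ultimately show ?thesis
    using \<open>q > 1\<close> by (simp add: m_def of_nat_diff)
qed

end
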